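(* Let $m\ge3$ and $k\ge1$. The PIN model on any $k$-regular, $k$-edge-connected loopless graph on vertex set $\mathcal M$ is strict Type $\mathcal S$.
   Context: Let $\mathcal M=\{1,\dots,m\}$. The PIN model on a graph $\mathcal G=(\mathcal M,\mathcal E)$, with $\mathcal E$ a finite multiset of 2-element subsets of $\mathcal M$, is defined as follows. Let $\mathcal E^{(n)}$ contain $n$ copies of each edge. Independent Bernoulli(1/2) variables $\xi_e$ are attached to the $e\in\mathcal E^{(n)}$, and $X^n_i=(\xi_e:e\in\mathcal E^{(n)},\ i\in e)$; the single-letter source $X_{\mathcal M}$ is the case $n=1$. $\mathcal G$ is $k$-regular if every vertex lies in exactly $k$ edges. $\mathcal G$ is $k$-edge-connected if for every nonempty proper subset $U\subset\mathcal M$ at least $k$ edges have one endpoint in $U$ and the other in $\mathcal M\setminus U$; equivalently, deleting fewer than $k$ edges never disconnects the graph. $\Delta(\mathcal P)=\frac1{|\mathcal P|-1}[\sum_{A\in\mathcal P}H(X_A)-H(X_{\mathcal M})]$ for partitions with at least 2 cells, where $X_A=(X_i:i\in A)$. The source is strict Type $\mathcal S$ if the singleton partition is the unique minimizer of $\Delta$. *)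

theory Defs
  imports "HOL-Probability.Probability" "HOL-Library.Disjoint_Sets"
begin

text \<open>A graph on the vertex set {1..m} is given by a list E of edges (a finite multiset
  of subsets of vertices, listed in some order; multiplicities are list multiplicities).\<close>

definition vertices :: "nat \<Rightarrow> nat set" where
  "vertices m = {1..m}"

definition loopless_graph :: "nat \<Rightarrow> nat set list \<Rightarrow> bool" where
  "loopless_graph m E \<longleftrightarrow> (\<forall>e\<in>set E. e \<subseteq> vertices m \<and> card e = 2)"

definition k_regular :: "nat \<Rightarrow> nat \<Rightarrow> nat set list \<Rightarrow> bool" where
  "k_regular m k E \<longleftrightarrow> (\<forall>i\<in>vertices m. length (filter (\<lambda>e. i \<in> e) E) = k)"

definition k_edge_connected :: "nat \<Rightarrow> nat \<Rightarrow> nat set list \<Rightarrow> bool" where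
  "k_edge_connected m k E \<longleftrightarrow>
     (\<forall>U. U \<noteq> {} \<longrightarrow> U \<subset> vertices m \<longrightarrow>
        k \<le> length (filter (\<lambda>e. e \<inter> U \<noteq> {} \<and> e - U \<noteq> {}) E))"

text \<open>The single-letter PIN source: independent uniform bits xi_j, one per edge index j;
  X_i = (xi_j : i in E!j); X_A = (X_i : i in A).\<close>

definition pin_bits :: "nat set list \<Rightarrow> (nat \<Rightarrow> bool) pmf" where
  "pin_bits E = pmf_of_set (PiE {..<length E} (\<lambda>_. UNIV :: bool set))"

definition pin_X :: "nat set list \<Rightarrow> nat set \<Rightarrow> (nat \<Rightarrow> bool) \<Rightarrow> (nat \<Rightarrow> nat \<Rightarrow> bool)" where
  "pin_X E A \<omega> = (\<lambda>i\<in>A. \<lambda>j\<in>{j. j < length E \<and> i \<in> E ! j}. \<omega> j)"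

definition shannon_entropy :: "'a pmf \<Rightarrow> real" where
  "shannon_entropy p = - (\<Sum>x\<in>set_pmf p. pmf p x * log 2 (pmf p x))"

definition pin_H :: "nat set list \<Rightarrow> nat set \<Rightarrow> real" where
  "pin_H E A = shannon_entropy (map_pmf (pin_X E A) (pin_bits E))"

definition Delta :: "nat \<Rightarrow> nat set list \<Rightarrow> nat set set \<Rightarrow> real" where
  "Delta m E P = ((\<Sum>A\<in>P. pin_H E A) - pin_H E (vertices m)) / (real (card P) - 1)"

definition singleton_partition :: "nat \<Rightarrow> nat set set" where
  "singleton_partition m = (\<lambda>i. {i}) ` vertices m"

definition strict_type_S :: "nat \<Rightarrow> nat set list \<Rightarrow> bool" where
  "strict_type_S m E \<longleftrightarrow>
     partition_on (vertices m) (singleton_partition m) \<and> 2 \<le> card (singleton_partition m) \<and>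
     (\<forall>P. partition_on (vertices m) P \<longrightarrow> 2 \<le> card P \<longrightarrow> P \<noteq> singleton_partition m \<longrightarrow>
         Delta m E (singleton_partition m) < Delta m E P)"

end

theory Submission
  imports Defs
begin

text \<open>In the PIN model X_A reveals exactly the uniform bits on the edges meeting A, so
  H(X_A) is the number of such edges. Summing over the cells of a partition counts every edge
  once, plus once more for each edge crossing between two cells; hence Delta(P) is half the
  total cut size of the cells divided by |P| - 1. For the singleton partition this is
  mk/(2(m-1)) by k-regularity. Any other partition has p < m cells, each cut by at least k
  edges by k-edge-connectivity, so Delta(P) \<ge> pk/(2(p-1)) > mk/(2(m-1)) because
  x/(x-1) is strictly decreasing.\<close>

lemma shannon_entropy_uniform:
  assumes fin: "finite (set_pmf p)" and const: "\<And>x. x \<in> set_pmf p \<Longrightarrow> pmf p x = c"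
  shows "shannon_entropy p = - log 2 c"
proof -
  have "(\<Sum>x\<in>set_pmf p. c) = 1"
    using sum_pmf_eq_1[OF fin order.refl] const by (metis (no_types, lifting) sum.cong)
  then have "shannon_entropy p = - (\<Sum>x\<in>set_pmf p. c) * log 2 c"
    unfolding shannon_entropy_def using const by (simp add: sum_distrib_right)
  with \<open>(\<Sum>x\<in>set_pmf p. c) = 1\<close> show ?thesis by simp
qed

lemma shannon_entropy_map_revealed_bits:
  fixes f :: "(nat \<Rightarrow> bool) \<Rightarrow> 'b" and n :: nat
  defines "\<Omega> \<equiv> PiE {..<n} (\<lambda>_. UNIV :: bool set)"
  assumes J: "J \<subseteq> {..<n}"
    and reveals: "\<And>\<omega> \<omega>'. \<omega> \<in> \<Omega> \<Longrightarrow> \<omega>' \<in> \<Omega> \<Longrightarrow> f \<omega> = f \<omega>' \<longleftrightarrow> (\<forall>j\<in>J. \<omega> j = \<omega>' j)"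
  shows "shannon_entropy (map_pmf f (pmf_of_set \<Omega>)) = card J"
proof -
  let ?p = "map_pmf f (pmf_of_set \<Omega>)"
  have fin: "finite \<Omega>" and ne: "\<Omega> \<noteq> {}"
    unfolding \<Omega>_def by (simp_all add: finite_PiE PiE_eq_empty_iff)
  have card_J: "card J \<le> n"
    using J by (metis card_lessThan card_mono finite_lessThan)
  have pmf_p: "pmf ?p y = 1 / 2 ^ card J" if y: "y \<in> set_pmf ?p" for y
  proof -
    obtain \<omega>\<^sub>0 where \<omega>\<^sub>0: "\<omega>\<^sub>0 \<in> \<Omega>" "y = f \<omega>\<^sub>0"
      using y fin ne by auto
    have fiber: "\<Omega> \<inter> f -` {y} = PiE {..<n} (\<lambda>j. if j \<in> J then {\<omega>\<^sub>0 j} else UNIV)"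
      using reveals[OF _ \<omega>\<^sub>0(1)] J unfolding \<omega>\<^sub>0(2) \<Omega>_def
      by (auto simp: PiE_iff split: if_split_asm) (metis subsetD)+
    have "card (\<Omega> \<inter> f -` {y}) = (\<Prod>j<n. if j \<in> J then 1 else 2)"
      unfolding fiber card_PiE[OF finite_lessThan] by (intro prod.cong) auto
    also have "\<dots> = 2 ^ (n - card J)"
      using J by (simp add: prod.If_cases Int_absorb2 Diff_eq[symmetric] card_Diff_subset
          finite_subset)
    finally have "card (\<Omega> \<inter> f -` {y}) = 2 ^ (n - card J)" .
    moreover have "card \<Omega> = 2 ^ n"
      unfolding \<Omega>_def by (simp add: card_PiE)
    moreover have "(2::real) ^ n = 2 ^ (n - card J) * 2 ^ card J"
      using card_J by (simp flip: power_add)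
    ultimately show ?thesis
      using fin ne by (simp add: pmf_map measure_pmf_of_set)
  qed
  have "finite (set_pmf ?p)"
    using fin ne by simp
  from shannon_entropy_uniform[OF this pmf_p] show ?thesis
    by (simp add: log_divide log_nat_power)
qed

definition num_edges_meeting :: "nat set list \<Rightarrow> nat set \<Rightarrow> nat" where
  "num_edges_meeting E A = length (filter (\<lambda>e. e \<inter> A \<noteq> {}) E)"

definition cut_size :: "nat set list \<Rightarrow> nat set \<Rightarrow> nat" where
  "cut_size E A = length (filter (\<lambda>e. e \<inter> A \<noteq> {} \<and> e - A \<noteq> {}) E)"

lemma pin_X_eq_iff:
  "pin_X E A \<omega> = pin_X E A \<omega>' \<longleftrightarrow> (\<forall>j<length E. E!j \<inter> A \<noteq> {} \<longrightarrow> \<omega> j = \<omega>' j)"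
proof
  assume eq: "pin_X E A \<omega> = pin_X E A \<omega>'"
  show "\<forall>j<length E. E!j \<inter> A \<noteq> {} \<longrightarrow> \<omega> j = \<omega>' j"
  proof (intro allI impI)
    fix j assume j: "j < length E" "E!j \<inter> A \<noteq> {}"
    then obtain i where "i \<in> E!j" "i \<in> A" by blast
    with j fun_cong[OF fun_cong[OF eq, of i], of j] show "\<omega> j = \<omega>' j"
      by (simp add: pin_X_def)
  qed
qed (auto simp: pin_X_def fun_eq_iff)

lemma pin_H_eq_num_edges_meeting: "pin_H E A = num_edges_meeting E A"
proof -
  let ?J = "{j. j < length E \<and> E!j \<inter> A \<noteq> {}}"
  have "pin_H E A = card ?J"
    unfolding pin_H_def pin_bits_def
    by (rule shannon_entropy_map_revealed_bits) (auto simp: pin_X_eq_iff)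
  also have "card ?J = num_edges_meeting E A"
    by (simp add: num_edges_meeting_def length_filter_conv_card)
  finally show ?thesis .
qed

lemma sum_length_filter_swap:
  "(\<Sum>A\<in>P. length (filter (Q A) E)) = (\<Sum>e\<leftarrow>E. card {A\<in>P. Q A e})" if "finite P"
proof (induction E)
  case (Cons e E)
  have "(\<Sum>A\<in>P. length (filter (Q A) (e # E))) =
        (\<Sum>A\<in>P. of_bool (Q A e) + length (filter (Q A) E))"
    by (intro sum.cong) auto
  also have "\<dots> = (\<Sum>A\<in>P. of_bool (Q A e)) + (\<Sum>A\<in>P. length (filter (Q A) E))"
    by (rule sum.distrib)
  also have "(\<Sum>A\<in>P. of_bool (Q A e)) = card {A\<in>P. Q A e}"
    using that by (simp add: sum.If_cases Int_def)
  finally show ?case using Cons by simp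
qed simp

lemma card_cells_meeting_edge:
  assumes P: "partition_on M P" and e: "e \<subseteq> M" "card e = 2"
  shows "2 * card {A\<in>P. e \<inter> A \<noteq> {}} = 2 + card {A\<in>P. e \<inter> A \<noteq> {} \<and> e - A \<noteq> {}}"
proof -
  obtain a b where ab: "e = {a, b}" "a \<noteq> b"
    using e(2) by (auto simp: card_2_iff)
  have same_cell: "A = B" if "A \<in> P" "B \<in> P" "x \<in> A" "x \<in> B" for A B x
    using partition_onD2[OF P] that by (auto simp: disjoint_def)
  obtain A\<^sub>a A\<^sub>b where cells: "A\<^sub>a \<in> P" "a \<in> A\<^sub>a" "A\<^sub>b \<in> P" "b \<in> A\<^sub>b"
    using e(1) ab partition_onD1[OF P] by blast
  have meeting: "{A\<in>P. e \<inter> A \<noteq> {}} = {A\<^sub>a, A\<^sub>b}"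
    using cells same_cell ab by blast
  show ?thesis
  proof (cases "A\<^sub>a = A\<^sub>b")
    case True
    have crossing: "{A\<in>P. e \<inter> A \<noteq> {} \<and> e - A \<noteq> {}} = {}"
      using True cells same_cell ab by blast
    show ?thesis unfolding meeting crossing using True by simp
  next
    case False
    have crossing: "{A\<in>P. e \<inter> A \<noteq> {} \<and> e - A \<noteq> {}} = {A\<^sub>a, A\<^sub>b}"
      using False cells same_cell ab by blast
    show ?thesis unfolding meeting crossing using False by simp
  qed
qed

lemma sum_num_edges_meeting_partition:
  assumes P: "partition_on M P" "finite P" and E: "\<forall>e\<in>set E. e \<subseteq> M \<and> card e = 2"
  shows "2 * (\<Sum>A\<in>P. num_edges_meeting E A) = 2 * length E + (\<Sum>A\<in>P. cut_size E A)"
proof -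
  have "2 * (\<Sum>A\<in>P. num_edges_meeting E A) = (\<Sum>e\<leftarrow>E. 2 * card {A\<in>P. e \<inter> A \<noteq> {}})"
    unfolding num_edges_meeting_def sum_length_filter_swap[OF P(2)] by (simp add: sum_list_const_mult)
  also have "\<dots> = (\<Sum>e\<leftarrow>E. 2 + card {A\<in>P. e \<inter> A \<noteq> {} \<and> e - A \<noteq> {}})"
    by (rule arg_cong[where f = sum_list], rule map_cong[OF refl],
        rule card_cells_meeting_edge[OF P(1)]) (use E in auto)
  also have "\<dots> = 2 * length E + (\<Sum>A\<in>P. cut_size E A)"
    unfolding cut_size_def sum_length_filter_swap[OF P(2)]
    by (simp only: sum_list_addf sum_list_triv) simp
  finally show ?thesis .
qed

lemma Delta_eq_sum_cut_size:
  assumes P: "partition_on (vertices m) P" and G: "loopless_graph m E"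
  shows "Delta m E P = (\<Sum>A\<in>P. cut_size E A) / (2 * (real (card P) - 1))"
proof -
  have edges: "\<forall>e\<in>set E. e \<subseteq> vertices m \<and> card e = 2"
    using G by (simp add: loopless_graph_def)
  have "finite P"
    using finite_elements[OF _ P] by (simp add: vertices_def)
  from arg_cong[where f = real, OF sum_num_edges_meeting_partition[OF P this edges]]
  have sum_eq: "2 * (\<Sum>A\<in>P. real (num_edges_meeting E A)) =
      2 * real (length E) + (\<Sum>A\<in>P. real (cut_size E A))"
    by simp
  have "e \<inter> vertices m \<noteq> {}" if "e \<in> set E" for e
    using edges that by (metis Int_absorb2 card.empty zero_neq_numeral)
  then have "num_edges_meeting E (vertices m) = length E"
    by (simp add: num_edges_meeting_def)
  then have excess:
      "(\<Sum>A\<in>P. pin_H E A) - pin_H E (vertices m) = (\<Sum>A\<in>P. real (cut_size E A)) / 2"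
    unfolding pin_H_eq_num_edges_meeting using sum_eq by linarith
  show ?thesis
    unfolding Delta_def excess by (simp add: of_nat_sum divide_divide_eq_left)
qed

lemma card_partition_less_card:
  assumes M: "finite M" and P: "partition_on M P" and not_singletons: "P \<noteq> (\<lambda>x. {x}) ` M"
  shows "card P < card M"
proof -
  have cells_finite: "finite A" if "A \<in> P" for A
    using that M partition_onD1[OF P] by (metis Union_upper finite_subset)
  have cells_nonempty: "A \<noteq> {}" if "A \<in> P" for A
    using that partition_onD3[OF P] by blast
  have "\<exists>A\<in>P. card A \<noteq> 1"
  proof (rule ccontr)
    assume "\<not> ?thesis"
    then have singleton_cells: "\<forall>A\<in>P. \<exists>x. A = {x}"
      by (simp add: card_1_singleton_iff)
    have "P = (\<lambda>x. {x}) ` M"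
      unfolding partition_onD1[OF P] using singleton_cells by fastforce
    with not_singletons show False ..
  qed
  then obtain A where A: "A \<in> P" "1 < card A"
    using cells_finite cells_nonempty by (metis card_0_eq less_one linorder_neqE_nat)
  have "card P = (\<Sum>A\<in>P. 1)"
    by simp
  also have "\<dots> < (\<Sum>A\<in>P. card A)"
    using A cells_finite cells_nonempty finite_elements[OF M P]
    by (intro sum_strict_mono_ex1) (auto simp: Suc_le_eq card_gt_0_iff)
  also have "\<dots> = card M"
    using card_Union_disjoint[OF partition_onD2[OF P]] cells_finite partition_onD1[OF P] by simp
  finally show ?thesis .
qed

lemma partition_on_cell_psubset:
  assumes P: "partition_on M P" and two_cells: "2 \<le> card P" and A: "A \<in> P"
  shows "A \<noteq> {}" and "A \<subset> M"
proof -
  show "A \<noteq> {}"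
    using A partition_onD3[OF P] by blast
  have "\<not> P \<subseteq> {A}"
    using two_cells card_mono[of "{A}" P] by auto
  then obtain B where B: "B \<in> P" "B \<noteq> A"
    by blast
  then obtain x where "x \<in> B"
    using partition_onD3[OF P] by (metis ex_in_conv)
  with A B partition_onD2[OF P] have "x \<in> M - A"
    using partition_onD1[OF P] by (auto simp: disjoint_def)
  with A partition_onD1[OF P] show "A \<subset> M"
    by blast
qed

lemma cut_size_singleton:
  assumes "\<forall>e\<in>set E. card e = 2"
  shows "cut_size E {i} = length (filter (\<lambda>e. i \<in> e) E)"
proof -
  have "\<not> e \<subseteq> {i}" if "e \<in> set E" for e
    using assms that card_mono[of "{i}" e] by auto
  then show ?thesis
    unfolding cut_size_def by (intro arg_cong[where f = length] filter_cong) auto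
qed

lemma partition_on_singleton_partition: "partition_on (vertices m) (singleton_partition m)"
  unfolding singleton_partition_def by (rule partition_on_singletons)

lemma card_singleton_partition: "card (singleton_partition m) = m"
  unfolding singleton_partition_def vertices_def by (simp add: card_image)

lemma Delta_singleton_partition:
  assumes G: "loopless_graph m E" and regular: "k_regular m k E"
  shows "Delta m E (singleton_partition m) = real m * k / (2 * (real m - 1))"
proof -
  have "(\<Sum>A\<in>singleton_partition m. cut_size E A) = (\<Sum>i\<in>vertices m. cut_size E {i})"
    unfolding singleton_partition_def by (simp add: sum.reindex)
  also have "\<dots> = (\<Sum>i\<in>vertices m. k)"
    using G regular by (simp add: cut_size_singleton loopless_graph_def k_regular_def)
  also have "\<dots> = m * k"
    by (simp add: vertices_def)
  finally show ?thesis
    using Delta_eq_sum_cut_size[OF partition_on_singleton_partition G]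
    by (simp add: card_singleton_partition)
qed

lemma Delta_lower_bound:
  assumes G: "loopless_graph m E" and connected: "k_edge_connected m k E"
    and P: "partition_on (vertices m) P" and two_cells: "2 \<le> card P"
  shows "real (card P) * k / (2 * (real (card P) - 1)) \<le> Delta m E P"
proof -
  have "k \<le> cut_size E A" if "A \<in> P" for A
    using partition_on_cell_psubset[OF P two_cells that] connected
    unfolding k_edge_connected_def cut_size_def by blast
  then have "card P * k \<le> (\<Sum>A\<in>P. cut_size E A)"
    using sum_mono[of P "\<lambda>_. k"] by simp
  then have "real (card P) * k \<le> (\<Sum>A\<in>P. cut_size E A)"
    by (metis of_nat_le_iff of_nat_mult)
  with two_cells show ?thesis
    unfolding Delta_eq_sum_cut_size[OF P G] by (simp add: divide_right_mono)
qed

lemma divide_pred_strict_antimono: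
  fixes p q :: real
  assumes "1 < p" and "p < q"
  shows "q / (q - 1) < p / (p - 1)"
  using assms by (simp add: field_simps)

theorem corollary4:
  fixes m k :: nat and E :: "nat set list"
  assumes "3 \<le> m" and "1 \<le> k"
    and "loopless_graph m E"
    and "k_regular m k E"
    and "k_edge_connected m k E"
  shows "strict_type_S m E"
  unfolding strict_type_S_def
proof (intro conjI allI impI)
  show "partition_on (vertices m) (singleton_partition m)"
    by (rule partition_on_singleton_partition)
  show "2 \<le> card (singleton_partition m)"
    using assms(1) by (simp add: card_singleton_partition)
next
  fix P
  assume P: "partition_on (vertices m) P" and two_cells: "2 \<le> card P"
    and "P \<noteq> singleton_partition m"
  then have "card P < m"
    using card_partition_less_card[of "vertices m" P]
    by (simp add: singleton_partition_def vertices_def)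
  with two_cells assms(2)
  have "k / 2 * (real m / (real m - 1)) < k / 2 * (real (card P) / (real (card P) - 1))"
    by (intro mult_strict_left_mono divide_pred_strict_antimono) auto
  then have "real m * k / (2 * (real m - 1)) < real (card P) * k / (2 * (real (card P) - 1))"
    by (simp add: mult.commute)
  also have "\<dots> \<le> Delta m E P"
    using Delta_lower_bound[OF assms(3,5) P two_cells] .
  finally show "Delta m E (singleton_partition m) < Delta m E P"
    using Delta_singleton_partition[OF assms(3,4)] by simp
qed

end
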